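(* Let $L$ be a distributive lattice with $|L|\ge2$. Then the only projection bands of $\mathrm{FBL}\langle L\rangle$ are $\{0\}$ and $\mathrm{FBL}\langle L\rangle$.
   Context: $L^*$ is the set of all lattice homomorphisms $x^*:L\to[-1,1]$; for $x\in L$, $\delta_x:L^*\to\mathbb R$ is $\delta_x(x^* )=x^*(x)$. A function $f:L^*\to\mathbb R$ is positively homogeneous if $f(\lambda x^* )=\lambda f(x^* )$ whenever $\lambda\ge0$ and $\lambda x^*\in L^*$; for such $f$, $\|f\|=\sup\{\sum_{i=1}^m|f(x_i^* )|: m\in\mathbb N,\ x_i^*\in L^*,\ \sup_{x\in L}\sum_{i=1}^m|x_i^*(x)|\le1\}$. $\mathrm{FBL}\langle L\rangle$ is the norm closure of the vector sublattice generated by $\{\delta_x:x\in L\}$ inside the Banach lattice of positively homogeneous functions on $L^*$ with finite norm, with pointwise order and operations. *)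

theory Defs
  imports Complex_Main
begin

definition Lstar :: "('a::distrib_lattice \<Rightarrow> real) set" where
  "Lstar = {\<phi>. (\<forall>x. -1 \<le> \<phi> x \<and> \<phi> x \<le> 1) \<and>
               (\<forall>x y. \<phi> (sup x y) = max (\<phi> x) (\<phi> y)) \<and>
               (\<forall>x y. \<phi> (inf x y) = min (\<phi> x) (\<phi> y))}"

text \<open>Functions L* \<rightarrow> R are represented as functions vanishing outside L*.\<close>
definition delta :: "'a::distrib_lattice \<Rightarrow> (('a \<Rightarrow> real) \<Rightarrow> real)" where
  "delta x = (\<lambda>\<phi>. if \<phi> \<in> Lstar then \<phi> x else 0)"

definition pos_homogeneous :: "(('a::distrib_lattice \<Rightarrow> real) \<Rightarrow> real) \<Rightarrow> bool" where
  "pos_homogeneous f \<longleftrightarrow> (\<forall>\<phi>\<in>Lstar. \<forall>c::real. c \<ge> 0 \<longrightarrow> (\<lambda>x. c * \<phi> x) \<in> Lstar \<longrightarrow>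
       f (\<lambda>x. c * \<phi> x) = c * f \<phi>)"

definition norm_sums :: "(('a::distrib_lattice \<Rightarrow> real) \<Rightarrow> real) \<Rightarrow> real set" where
  "norm_sums f = {(\<Sum>\<phi>\<leftarrow>xs. \<bar>f \<phi>\<bar>) | xs. set xs \<subseteq> Lstar \<and> (\<forall>x. (\<Sum>\<phi>\<leftarrow>xs. \<bar>\<phi> x\<bar>) \<le> 1)}"

definition fbl_norm :: "(('a::distrib_lattice \<Rightarrow> real) \<Rightarrow> real) \<Rightarrow> real" where
  "fbl_norm f = Sup (norm_sums f)"

definition PH :: "(('a::distrib_lattice \<Rightarrow> real) \<Rightarrow> real) set" where
  "PH = {f. (\<forall>\<phi>. \<phi> \<notin> Lstar \<longrightarrow> f \<phi> = 0) \<and> pos_homogeneous f \<and> bdd_above (norm_sums f)}"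

inductive_set gen_sublattice :: "(('a::distrib_lattice \<Rightarrow> real) \<Rightarrow> real) set" where
  gen_delta: "delta x \<in> gen_sublattice"
| gen_zero: "(\<lambda>\<phi>. 0) \<in> gen_sublattice"
| gen_add: "f \<in> gen_sublattice \<Longrightarrow> g \<in> gen_sublattice \<Longrightarrow> (\<lambda>\<phi>. f \<phi> + g \<phi>) \<in> gen_sublattice"
| gen_scale: "f \<in> gen_sublattice \<Longrightarrow> (\<lambda>\<phi>. c * f \<phi>) \<in> gen_sublattice"
| gen_max: "f \<in> gen_sublattice \<Longrightarrow> g \<in> gen_sublattice \<Longrightarrow> (\<lambda>\<phi>. max (f \<phi>) (g \<phi>)) \<in> gen_sublattice"
| gen_min: "f \<in> gen_sublattice \<Longrightarrow> g \<in> gen_sublattice \<Longrightarrow> (\<lambda>\<phi>. min (f \<phi>) (g \<phi>)) \<in> gen_sublattice"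

definition FBL :: "(('a::distrib_lattice \<Rightarrow> real) \<Rightarrow> real) set" where
  "FBL = {f \<in> PH. \<forall>\<epsilon>>0. \<exists>g\<in>gen_sublattice. fbl_norm (\<lambda>\<phi>. f \<phi> - g \<phi>) < \<epsilon>}"

definition is_ideal :: "(('a::distrib_lattice \<Rightarrow> real) \<Rightarrow> real) set \<Rightarrow> bool" where
  "is_ideal B \<longleftrightarrow> B \<subseteq> FBL \<and> (\<lambda>\<phi>. 0) \<in> B \<and>
     (\<forall>f\<in>B. \<forall>g\<in>B. (\<lambda>\<phi>. f \<phi> + g \<phi>) \<in> B) \<and>
     (\<forall>f\<in>B. \<forall>c::real. (\<lambda>\<phi>. c * f \<phi>) \<in> B) \<and>
     (\<forall>f\<in>B. \<forall>g\<in>FBL. (\<forall>\<phi>. \<bar>g \<phi>\<bar> \<le> \<bar>f \<phi>\<bar>) \<longrightarrow> g \<in> B)"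

definition is_sup_in :: "(('a::distrib_lattice \<Rightarrow> real) \<Rightarrow> real) set \<Rightarrow>
     (('a \<Rightarrow> real) \<Rightarrow> real) set \<Rightarrow> (('a \<Rightarrow> real) \<Rightarrow> real) \<Rightarrow> bool" where
  "is_sup_in E A s \<longleftrightarrow> s \<in> E \<and> (\<forall>a\<in>A. a \<le> s) \<and> (\<forall>u\<in>E. (\<forall>a\<in>A. a \<le> u) \<longrightarrow> s \<le> u)"

definition is_band :: "(('a::distrib_lattice \<Rightarrow> real) \<Rightarrow> real) set \<Rightarrow> bool" where
  "is_band B \<longleftrightarrow> is_ideal B \<and> (\<forall>A s. A \<subseteq> B \<longrightarrow> is_sup_in FBL A s \<longrightarrow> s \<in> B)"

definition disjoint_complement :: "(('a::distrib_lattice \<Rightarrow> real) \<Rightarrow> real) set \<Rightarrow>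
     (('a \<Rightarrow> real) \<Rightarrow> real) set" where
  "disjoint_complement B = {g \<in> FBL. \<forall>f\<in>B. \<forall>\<phi>. min \<bar>f \<phi>\<bar> \<bar>g \<phi>\<bar> = 0}"

definition is_projection_band :: "(('a::distrib_lattice \<Rightarrow> real) \<Rightarrow> real) set \<Rightarrow> bool" where
  "is_projection_band B \<longleftrightarrow> is_band B \<and>
     (\<forall>f\<in>FBL. \<exists>g\<in>B. \<exists>h\<in>disjoint_complement B. f = (\<lambda>\<phi>. g \<phi> + h \<phi>))"

end

theory Submission
  imports Defs "HOL-Analysis.Analysis"
begin

text \<open>Every \<open>f \<in> FBL\<close> is a uniform limit on \<open>Lstar\<close> of lattice-linear expressions in the
  evaluations \<open>delta x\<close>, so \<open>f\<close> is continuous along every path in \<open>Lstar\<close> with continuous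
  coordinates. If \<open>B\<close> is a projection band, decomposing \<open>delta x\<close> with \<open>\<phi> x \<noteq> 0\<close> shows that
  every nonzero \<open>\<phi> \<in> Lstar\<close> lies in the support of \<open>B\<close> or of its disjoint complement, and
  never in both; by connectedness the side cannot change along a path of nonzero
  homomorphisms. The paths \<open>t \<mapsto> max \<phi> t\<close> and \<open>t \<mapsto> min \<phi> (-t)\<close> join every nonzero \<open>\<phi>\<close> to
  the constant \<open>1\<close> or \<open>-1\<close>, and a \<open>{-1, 1}\<close>-valued homomorphism, obtained from a prime filter
  separating two elements of the lattice, is joined to both. Hence \<open>B\<close> or its complement
  vanishes at every nonzero \<open>\<phi>\<close>, and by positive homogeneity also at \<open>\<phi> = 0\<close>.\<close>

definition norming_list :: "('a::distrib_lattice \<Rightarrow> real) list \<Rightarrow> bool" where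
  "norming_list xs \<longleftrightarrow> set xs \<subseteq> Lstar \<and> (\<forall>x. (\<Sum>\<phi>\<leftarrow>xs. \<bar>\<phi> x\<bar>) \<le> 1)"

lemma bdd_above_norm_sums_iff:
  "bdd_above (norm_sums f) \<longleftrightarrow> (\<exists>C. \<forall>xs. norming_list xs \<longrightarrow> (\<Sum>\<phi>\<leftarrow>xs. \<bar>f \<phi>\<bar>) \<le> C)"
  unfolding norm_sums_def norming_list_def bdd_above_def by blast

lemma bdd_above_norm_sums_dominated:
  assumes "bdd_above (norm_sums f)" "bdd_above (norm_sums g)" "a \<ge> 0" "b \<ge> 0"
    and "\<And>\<phi>. \<phi> \<in> Lstar \<Longrightarrow> \<bar>h \<phi>\<bar> \<le> a * \<bar>f \<phi>\<bar> + b * \<bar>g \<phi>\<bar>"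
  shows "bdd_above (norm_sums h)"
proof -
  obtain C D where C: "\<And>xs. norming_list xs \<Longrightarrow> (\<Sum>\<phi>\<leftarrow>xs. \<bar>f \<phi>\<bar>) \<le> C"
    and D: "\<And>xs. norming_list xs \<Longrightarrow> (\<Sum>\<phi>\<leftarrow>xs. \<bar>g \<phi>\<bar>) \<le> D"
    using assms(1,2) unfolding bdd_above_norm_sums_iff by blast
  have "(\<Sum>\<phi>\<leftarrow>xs. \<bar>h \<phi>\<bar>) \<le> a * C + b * D" if xs: "norming_list xs" for xs
  proof -
    have "(\<Sum>\<phi>\<leftarrow>xs. \<bar>h \<phi>\<bar>) \<le> (\<Sum>\<phi>\<leftarrow>xs. a * \<bar>f \<phi>\<bar> + b * \<bar>g \<phi>\<bar>)"
      using xs assms(5) by (intro sum_list_mono) (auto simp: norming_list_def)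
    also have "\<dots> = a * (\<Sum>\<phi>\<leftarrow>xs. \<bar>f \<phi>\<bar>) + b * (\<Sum>\<phi>\<leftarrow>xs. \<bar>g \<phi>\<bar>)"
      by (simp add: sum_list_addf sum_list_const_mult)
    also have "\<dots> \<le> a * C + b * D"
      using C[OF xs] D[OF xs] assms(3,4) by (intro add_mono mult_left_mono)
    finally show ?thesis .
  qed
  then show ?thesis unfolding bdd_above_norm_sums_iff by blast
qed

lemma bdd_above_norm_sums_delta: "bdd_above (norm_sums (delta x))"
proof -
  have "(\<Sum>\<phi>\<leftarrow>xs. \<bar>delta x \<phi>\<bar>) = (\<Sum>\<phi>\<leftarrow>xs. \<bar>\<phi> x\<bar>)" if "norming_list xs" for xs
    using that by (intro arg_cong[where f = sum_list] map_cong) (auto simp: norming_list_def delta_def)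
  then show ?thesis unfolding bdd_above_norm_sums_iff norming_list_def by auto
qed

lemma bdd_above_norm_sums_gen_sublattice:
  "f \<in> gen_sublattice \<Longrightarrow> bdd_above (norm_sums f)"
proof (induction rule: gen_sublattice.induct)
  case gen_zero
  show ?case unfolding bdd_above_norm_sums_iff by auto
next
  case (gen_scale f c)
  show ?case
    by (rule bdd_above_norm_sums_dominated[of f f "\<bar>c\<bar>" 0])
      (use gen_scale.IH in \<open>simp_all add: abs_mult\<close>)
next
  case (gen_add f g)
  show ?case
    using gen_add.IH by (rule bdd_above_norm_sums_dominated[of f g 1 1])
      (simp_all add: abs_triangle_ineq)
next
  case (gen_max f g)
  show ?case
    using gen_max.IH by (rule bdd_above_norm_sums_dominated[of f g 1 1]) simp_all
next
  case (gen_min f g)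
  show ?case
    using gen_min.IH by (rule bdd_above_norm_sums_dominated[of f g 1 1]) simp_all
qed (rule bdd_above_norm_sums_delta)

lemma abs_le_fbl_norm:
  assumes "bdd_above (norm_sums f)" "\<phi> \<in> Lstar"
  shows "\<bar>f \<phi>\<bar> \<le> fbl_norm f"
proof -
  have "norming_list [\<phi>]"
    using assms(2) by (auto simp: norming_list_def Lstar_def abs_le_iff)
  then have "\<bar>f \<phi>\<bar> \<in> norm_sums f"
    unfolding norm_sums_def norming_list_def by (auto intro!: exI[of _ "[\<phi>]"])
  then show ?thesis unfolding fbl_norm_def using assms(1) by (rule cSup_upper)
qed

lemma fbl_norm_zero: "fbl_norm (\<lambda>\<phi>::'a::distrib_lattice \<Rightarrow> real. 0) = 0"
proof -
  have "norm_sums (\<lambda>\<phi>::'a \<Rightarrow> real. 0) = {0}"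
    unfolding norm_sums_def by (auto intro!: exI[of _ "[]"])
  then show ?thesis by (simp add: fbl_norm_def)
qed

lemma delta_in_FBL: "delta x \<in> FBL"
proof -
  have "delta x \<in> PH"
    unfolding PH_def pos_homogeneous_def using bdd_above_norm_sums_delta by (auto simp: delta_def)
  then show ?thesis
    unfolding FBL_def by (auto simp: fbl_norm_zero intro!: bexI[of _ "delta x"] gen_delta)
qed

lemma continuous_on_uniform_approx:
  fixes f :: "'a::metric_space \<Rightarrow> 'b::metric_space"
  assumes "\<And>e. e > 0 \<Longrightarrow> \<exists>g. continuous_on T g \<and> (\<forall>t\<in>T. dist (f t) (g t) < e)"
  shows "continuous_on T f"
  unfolding continuous_on_iff
proof (intro ballI allI impI)
  fix t and e :: real
  assume t: "t \<in> T" and e: "e > 0"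
  then have e3: "e / 3 > 0" by simp
  then obtain g where g: "continuous_on T g" and close: "\<forall>s\<in>T. dist (f s) (g s) < e / 3"
    using assms by blast
  obtain d where d: "d > 0" "\<forall>s\<in>T. dist s t < d \<longrightarrow> dist (g s) (g t) < e / 3"
    using g t e3 unfolding continuous_on_iff by blast
  have "dist (f s) (f t) < e" if "s \<in> T" "dist s t < d" for s
  proof -
    have "dist (f s) (f t) \<le> dist (f s) (g s) + dist (g s) (g t) + dist (g t) (f t)"
      using dist_triangle[of "f s" "f t" "g s"] dist_triangle[of "g s" "f t" "g t"] by linarith
    moreover have "dist (g t) (f t) < e / 3"
      using close t by (simp add: dist_commute)
    ultimately show ?thesis
      using close d(2) that by fastforce
  qed
  then show "\<exists>d>0. \<forall>s\<in>T. dist s t < d \<longrightarrow> dist (f s) (f t) < e"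
    using d(1) by blast
qed

lemma continuous_on_gen_sublattice_comp:
  assumes "f \<in> gen_sublattice" "p ` T \<subseteq> Lstar" "\<And>x. continuous_on T (\<lambda>t. p t x)"
  shows "continuous_on T (\<lambda>t. f (p t))"
  using assms(1)
proof (induction rule: gen_sublattice.induct)
  case (gen_delta x)
  show ?case
    using assms(3)[of x] by (rule continuous_on_cong[THEN iffD1, rotated 2])
      (use assms(2) in \<open>auto simp: delta_def\<close>)
qed (simp_all add: continuous_intros)

lemma continuous_on_FBL_comp:
  fixes p :: "'b::metric_space \<Rightarrow> 'a::distrib_lattice \<Rightarrow> real"
  assumes "f \<in> FBL" "p ` T \<subseteq> Lstar" "\<And>x. continuous_on T (\<lambda>t. p t x)"
  shows "continuous_on T (\<lambda>t. f (p t))"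
proof (rule continuous_on_uniform_approx)
  fix e :: real assume "e > 0"
  then obtain g where g: "g \<in> gen_sublattice" "fbl_norm (\<lambda>\<phi>. f \<phi> - g \<phi>) < e"
    using assms(1) unfolding FBL_def by blast
  have "bdd_above (norm_sums f)"
    using assms(1) by (simp add: FBL_def PH_def)
  then have bdd: "bdd_above (norm_sums (\<lambda>\<phi>. f \<phi> - g \<phi>))"
    by (rule bdd_above_norm_sums_dominated[of f g 1 1])
      (use bdd_above_norm_sums_gen_sublattice[OF g(1)] in \<open>simp_all add: abs_triangle_ineq4\<close>)
  have "dist (f (p t)) (g (p t)) < e" if "t \<in> T" for t
  proof -
    have "\<bar>f (p t) - g (p t)\<bar> \<le> fbl_norm (\<lambda>\<phi>. f \<phi> - g \<phi>)"
      using abs_le_fbl_norm[OF bdd] that assms(2) by blast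
    then show ?thesis
      using g(2) by (simp add: dist_real_def)
  qed
  then show "\<exists>g. continuous_on T g \<and> (\<forall>t\<in>T. dist (f (p t)) (g t) < e)"
    using continuous_on_gen_sublattice_comp[OF g(1) assms(2,3)] by blast
qed

definition in_support :: "(('a::distrib_lattice \<Rightarrow> real) \<Rightarrow> real) set \<Rightarrow> ('a \<Rightarrow> real) \<Rightarrow> bool" where
  "in_support S \<phi> \<longleftrightarrow> (\<exists>f\<in>S. f \<phi> \<noteq> 0)"

lemma not_in_support_disjoint_complement:
  "in_support S \<phi> \<Longrightarrow> \<not> in_support (disjoint_complement S) \<phi>"
  unfolding in_support_def disjoint_complement_def by (auto simp: min_def split: if_splits)

lemma in_support_projection_band_or_complement:
  assumes "is_projection_band B" "\<phi> \<in> Lstar" "\<phi> \<noteq> (\<lambda>x. 0)"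
  shows "in_support B \<phi> \<or> in_support (disjoint_complement B) \<phi>"
proof -
  obtain x where x: "\<phi> x \<noteq> 0"
    using assms(3) by auto
  obtain g h where gh: "g \<in> B" "h \<in> disjoint_complement B" "delta x = (\<lambda>\<phi>. g \<phi> + h \<phi>)"
    using assms(1) delta_in_FBL unfolding is_projection_band_def by blast
  have "g \<phi> + h \<phi> \<noteq> 0"
    using x assms(2) fun_cong[OF gh(3), of \<phi>] by (simp add: delta_def)
  then show ?thesis
    using gh(1,2) unfolding in_support_def by force
qed

lemma openin_in_support_comp:
  fixes p :: "'b::metric_space \<Rightarrow> 'a::distrib_lattice \<Rightarrow> real"
  assumes "S \<subseteq> FBL" "p ` T \<subseteq> Lstar" "\<And>x. continuous_on T (\<lambda>t. p t x)"
  shows "openin (top_of_set T) {t\<in>T. in_support S (p t)}"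
proof -
  have "{t\<in>T. in_support S (p t)} = (\<Union>f\<in>S. T \<inter> (\<lambda>t. f (p t)) -` (- {0}))"
    unfolding in_support_def by auto
  moreover have "openin (top_of_set T) (T \<inter> (\<lambda>t. f (p t)) -` (- {0}))" if "f \<in> S" for f
  proof (rule continuous_openin_preimage_gen)
    show "continuous_on T (\<lambda>t. f (p t))"
      using that assms(1) by (intro continuous_on_FBL_comp[OF _ assms(2,3)]) blast
  qed auto
  ultimately show ?thesis
    by (metis (no_types, lifting) openin_Union imageE)
qed

lemma in_support_constant_on_connected:
  fixes p :: "'b::metric_space \<Rightarrow> 'a::distrib_lattice \<Rightarrow> real"
  assumes B: "is_projection_band B"
    and T: "connected T" "p ` T \<subseteq> Lstar - {\<lambda>x. 0}" "\<And>x. continuous_on T (\<lambda>t. p t x)"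
    and "s \<in> T" "t \<in> T"
  shows "in_support B (p s) = in_support B (p t)"
proof -
  let ?E = "\<lambda>S. {t\<in>T. in_support S (p t)}"
  have B_FBL: "B \<subseteq> FBL" and complement_FBL: "disjoint_complement B \<subseteq> FBL"
    using B by (auto simp: is_projection_band_def is_band_def is_ideal_def disjoint_complement_def)
  have "openin (top_of_set T) (?E B)" "openin (top_of_set T) (?E (disjoint_complement B))"
    using T(2,3) by (auto intro!: openin_in_support_comp B_FBL complement_FBL)
  moreover have "T \<subseteq> ?E B \<union> ?E (disjoint_complement B)"
    using in_support_projection_band_or_complement[OF B] T(2) by blast
  moreover have "?E B \<inter> ?E (disjoint_complement B) = {}"
    using not_in_support_disjoint_complement by blast
  ultimately have "?E B = {} \<or> ?E (disjoint_complement B) = {}"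
    using T(1) unfolding connected_openin by blast
  then show ?thesis
    using \<open>T \<subseteq> _\<close> \<open>s \<in> T\<close> \<open>t \<in> T\<close> by blast
qed

lemma Lstar_bounds: "\<phi> \<in> Lstar \<Longrightarrow> -1 \<le> \<phi> x \<and> \<phi> x \<le> 1"
  unfolding Lstar_def by auto

lemma Lstar_max_const: "\<phi> \<in> Lstar \<Longrightarrow> -1 \<le> c \<Longrightarrow> c \<le> 1 \<Longrightarrow> (\<lambda>x. max (\<phi> x) c) \<in> Lstar"
  unfolding Lstar_def by (auto simp: max_def min_def)

lemma Lstar_min_const: "\<phi> \<in> Lstar \<Longrightarrow> -1 \<le> c \<Longrightarrow> c \<le> 1 \<Longrightarrow> (\<lambda>x. min (\<phi> x) c) \<in> Lstar"
  unfolding Lstar_def by (auto simp: max_def min_def)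

lemma in_support_eq_one:
  assumes B: "is_projection_band B" and "\<phi> \<in> Lstar" "\<phi> x > 0"
  shows "in_support B \<phi> = in_support B (\<lambda>x. 1)"
proof -
  define p where "p = (\<lambda>t::real. \<lambda>x. max (\<phi> x) t)"
  have "p ` {-1..1} \<subseteq> Lstar - {\<lambda>x. 0}"
    using Lstar_max_const[OF assms(2)] assms(3) by (fastforce simp: p_def dest: fun_cong[of _ _ x])
  then have "in_support B (p (-1)) = in_support B (p 1)"
    by (intro in_support_constant_on_connected[OF B]) (auto simp: p_def intro!: continuous_intros)
  moreover have "p (-1) = \<phi>" "p 1 = (\<lambda>x. 1)"
    by (simp_all add: p_def fun_eq_iff max_absorb1 max_absorb2 Lstar_bounds[OF assms(2)])
  ultimately show ?thesis by simp
qed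

lemma in_support_eq_minus_one:
  assumes B: "is_projection_band B" and "\<phi> \<in> Lstar" "\<phi> x < 0"
  shows "in_support B \<phi> = in_support B (\<lambda>x. -1)"
proof -
  define p where "p = (\<lambda>t::real. \<lambda>x. min (\<phi> x) (-t))"
  have "p ` {-1..1} \<subseteq> Lstar - {\<lambda>x. 0}"
    using Lstar_min_const[OF assms(2)] assms(3) by (fastforce simp: p_def dest: fun_cong[of _ _ x])
  then have "in_support B (p (-1)) = in_support B (p 1)"
    by (intro in_support_constant_on_connected[OF B]) (auto simp: p_def intro!: continuous_intros)
  moreover have "p (-1) = \<phi>" "p 1 = (\<lambda>x. -1)"
    by (simp_all add: p_def fun_eq_iff min_absorb1 min_absorb2 Lstar_bounds[OF assms(2)])
  ultimately show ?thesis by simp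
qed

lemma PH_eq_zero_if_vanishes_off_zero:
  assumes "f \<in> PH" "\<And>\<phi>. \<phi> \<in> Lstar \<Longrightarrow> \<phi> \<noteq> (\<lambda>x. 0) \<Longrightarrow> f \<phi> = 0"
  shows "f = (\<lambda>\<phi>. 0)"
proof
  fix \<phi> :: "'a \<Rightarrow> real"
  show "f \<phi> = 0"
  proof (cases "\<phi> \<in> Lstar \<and> \<phi> = (\<lambda>x. 0)")
    case True
    then have "\<phi> \<in> Lstar" and zero_scaled: "(\<lambda>x. 0 * \<phi> x) = \<phi>"
      by auto
    moreover have "pos_homogeneous f"
      using assms(1) by (simp add: PH_def)
    ultimately have "f (\<lambda>x. 0 * \<phi> x) = 0 * f \<phi>"
      unfolding pos_homogeneous_def by (metis order_refl)
    then show ?thesis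
      unfolding zero_scaled by simp
  next
    case False
    then show ?thesis
      using assms unfolding PH_def by blast
  qed
qed

lemma PH_subset_zero_if_no_support:
  assumes "S \<subseteq> PH" "\<And>\<phi>. \<phi> \<in> Lstar \<Longrightarrow> \<phi> \<noteq> (\<lambda>x. 0) \<Longrightarrow> \<not> in_support S \<phi>"
  shows "S \<subseteq> {\<lambda>\<phi>. 0}"
proof
  fix f assume "f \<in> S"
  then have "f = (\<lambda>\<phi>. 0)"
    using assms by (intro PH_eq_zero_if_vanishes_off_zero) (auto simp: in_support_def)
  then show "f \<in> {\<lambda>\<phi>. 0}"
    by simp
qed

definition lattice_filter :: "'a::lattice set \<Rightarrow> bool" where
  "lattice_filter F \<longleftrightarrow> (\<forall>x\<in>F. \<forall>y. x \<le> y \<longrightarrow> y \<in> F) \<and> (\<forall>x\<in>F. \<forall>y\<in>F. inf x y \<in> F)"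

lemma lattice_filter_Union_chain:
  assumes "\<And>F. F \<in> C \<Longrightarrow> lattice_filter F"
    and "\<And>F G. F \<in> C \<Longrightarrow> G \<in> C \<Longrightarrow> F \<subseteq> G \<or> G \<subseteq> F"
  shows "lattice_filter (\<Union>C)"
  unfolding lattice_filter_def
proof (intro conjI ballI allI impI)
  fix x y assume "x \<in> \<Union>C" "x \<le> y"
  then show "y \<in> \<Union>C"
    using assms(1) unfolding lattice_filter_def by blast
next
  fix x y assume "x \<in> \<Union>C" "y \<in> \<Union>C"
  then obtain F G where "F \<in> C" "G \<in> C" "x \<in> F" "y \<in> G"
    by blast
  with assms show "inf x y \<in> \<Union>C"
    unfolding lattice_filter_def by (metis UnionI subsetD)
qed

lemma lattice_filter_adjoin:
  assumes "lattice_filter M"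
  shows "lattice_filter {z. \<exists>m\<in>M. inf m x \<le> z}"
  unfolding lattice_filter_def
proof (intro conjI ballI allI impI)
  fix z w assume "z \<in> {z. \<exists>m\<in>M. inf m x \<le> z}" "z \<le> w"
  then show "w \<in> {z. \<exists>m\<in>M. inf m x \<le> z}"
    by (blast intro: order_trans)
next
  fix z w assume "z \<in> {z. \<exists>m\<in>M. inf m x \<le> z}" "w \<in> {z. \<exists>m\<in>M. inf m x \<le> z}"
  then obtain m n where mn: "m \<in> M" "n \<in> M" "inf m x \<le> z" "inf n x \<le> w"
    by blast
  have "inf (inf m n) x \<le> z"
    using inf_mono[OF inf_le1[of m n] order_refl[of x]] mn(3) by (rule order_trans)
  moreover have "inf (inf m n) x \<le> w"
    using inf_mono[OF inf_le2[of m n] order_refl[of x]] mn(4) by (rule order_trans)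
  moreover have "inf m n \<in> M"
    using assms mn(1,2) unfolding lattice_filter_def by blast
  ultimately show "inf z w \<in> {z. \<exists>m\<in>M. inf m x \<le> z}"
    using le_infI by blast
qed

text \<open>If \<open>x \<notin> M\<close>, maximality forces \<open>a\<close> into the filter generated by \<open>M\<close> and \<open>x\<close>.\<close>
lemma maximal_filter_prime:
  fixes a :: "'a::distrib_lattice"
  assumes M: "lattice_filter M" "a \<notin> M"
    and maximal: "\<And>F. lattice_filter F \<Longrightarrow> a \<notin> F \<Longrightarrow> M \<subseteq> F \<Longrightarrow> F = M"
    and "sup x y \<in> M"
  shows "x \<in> M \<or> y \<in> M"
proof -
  have below_a: "\<exists>m\<in>M. inf m z \<le> a" if "z \<notin> M" for z
  proof (rule ccontr)
    let ?F = "{w. \<exists>m\<in>M. inf m z \<le> w}"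
    assume "\<not> (\<exists>m\<in>M. inf m z \<le> a)"
    then have "a \<notin> ?F" by blast
    moreover have "M \<subseteq> ?F"
      using inf_le1 by blast
    ultimately have "?F = M"
      using maximal lattice_filter_adjoin[OF M(1)] by blast
    moreover have "z \<in> ?F"
      using \<open>sup x y \<in> M\<close> inf_le2 by blast
    ultimately show False
      using that by blast
  qed
  show ?thesis
  proof (rule ccontr)
    assume "\<not> (x \<in> M \<or> y \<in> M)"
    then obtain m n where mn: "m \<in> M" "n \<in> M" "inf m x \<le> a" "inf n y \<le> a"
      using below_a by blast
    have "inf (inf m n) (sup x y) \<in> M"
      using M(1) mn(1,2) \<open>sup x y \<in> M\<close> unfolding lattice_filter_def by blast
    moreover have "inf (inf m n) x \<le> a"
      using inf_mono[OF inf_le1[of m n] order_refl[of x]] mn(3) by (rule order_trans)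
    moreover have "inf (inf m n) y \<le> a"
      using inf_mono[OF inf_le2[of m n] order_refl[of y]] mn(4) by (rule order_trans)
    ultimately show False
      using M inf_sup_distrib1[of "inf m n" x y] sup_least unfolding lattice_filter_def by metis
  qed
qed

lemma prime_filter_exists:
  fixes a b :: "'a::distrib_lattice"
  assumes "\<not> b \<le> a"
  obtains M where "lattice_filter M" "b \<in> M" "a \<notin> M" "\<And>x y. sup x y \<in> M \<Longrightarrow> x \<in> M \<or> y \<in> M"
proof -
  let ?A = "{F. lattice_filter F \<and> b \<in> F \<and> a \<notin> F}"
  have "{z. b \<le> z} \<in> ?A"
    using assms by (auto simp: lattice_filter_def)
  moreover have "\<Union>C \<in> ?A" if C: "C \<noteq> {}" "subset.chain ?A C" for C
  proof -
    have "C \<subseteq> ?A" "\<And>F G. F \<in> C \<Longrightarrow> G \<in> C \<Longrightarrow> F \<subseteq> G \<or> G \<subseteq> F"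
      using C(2) unfolding subset_chain_def by auto
    then have "lattice_filter (\<Union>C)"
      by (intro lattice_filter_Union_chain) auto
    with C(1) \<open>C \<subseteq> ?A\<close> show ?thesis
      by blast
  qed
  ultimately obtain M where M: "M \<in> ?A" and maximal: "\<forall>F\<in>?A. M \<subseteq> F \<longrightarrow> F = M"
    using subset_Zorn_nonempty[of ?A] by blast
  have "x \<in> M \<or> y \<in> M" if "sup x y \<in> M" for x y
    by (rule maximal_filter_prime[of M a]) (use M maximal that in auto)
  with M show ?thesis
    by (intro that) auto
qed

lemma Lstar_separating:
  fixes a b :: "'a::distrib_lattice"
  assumes "\<not> b \<le> a"
  obtains \<psi> where "\<psi> \<in> Lstar" "\<psi> a = -1" "\<psi> b = 1"
proof -
  obtain M where M: "lattice_filter M" "b \<in> M" "a \<notin> M"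
    and prime: "\<And>x y. sup x y \<in> M \<Longrightarrow> x \<in> M \<or> y \<in> M"
    using prime_filter_exists[OF assms] by blast
  have up: "\<And>x y. x \<in> M \<Longrightarrow> x \<le> y \<Longrightarrow> y \<in> M"
    and inf: "\<And>x y. x \<in> M \<Longrightarrow> y \<in> M \<Longrightarrow> inf x y \<in> M"
    using M(1) unfolding lattice_filter_def by blast+
  have sup_iff: "sup x y \<in> M \<longleftrightarrow> x \<in> M \<or> y \<in> M" for x y
    using prime up[OF _ sup_ge1] up[OF _ sup_ge2] by blast
  have inf_iff: "inf x y \<in> M \<longleftrightarrow> x \<in> M \<and> y \<in> M" for x y
    using inf up[OF _ inf_le1] up[OF _ inf_le2] by blast
  define \<psi> where "\<psi> = (\<lambda>z. if z \<in> M then 1 else -1::real)"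
  have "\<psi> \<in> Lstar"
    unfolding Lstar_def \<psi>_def by (simp add: sup_iff inf_iff)
  moreover have "\<psi> a = -1" "\<psi> b = 1"
    using M(2,3) by (simp_all add: \<psi>_def)
  ultimately show ?thesis
    by (rule that)
qed

lemma in_support_projection_band_eq_one:
  fixes B :: "(('a::distrib_lattice \<Rightarrow> real) \<Rightarrow> real) set"
  assumes "\<exists>x y :: 'a. x \<noteq> y" "is_projection_band B"
    and "\<phi> \<in> Lstar" "\<phi> \<noteq> (\<lambda>x. 0)"
  shows "in_support B \<phi> = in_support B (\<lambda>x. 1)"
proof -
  obtain a b :: 'a where "\<not> b \<le> a"
    using assms(1) by (metis order.antisym)
  then obtain \<psi> where \<psi>: "\<psi> \<in> Lstar" "\<psi> a = -1" "\<psi> b = 1"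
    by (rule Lstar_separating)
  have one_minus_one: "in_support B (\<lambda>x. -1) = in_support B (\<lambda>x. 1)"
    using in_support_eq_one[OF assms(2) \<psi>(1), of b] in_support_eq_minus_one[OF assms(2) \<psi>(1), of a]
      \<psi>(2,3) by simp
  obtain x where "\<phi> x \<noteq> 0"
    using assms(4) by auto
  then consider "\<phi> x > 0" | "\<phi> x < 0"
    by linarith
  then show ?thesis
    by cases (use in_support_eq_one[OF assms(2,3)] in_support_eq_minus_one[OF assms(2,3)]
        one_minus_one in auto)
qed

theorem mainTheorem11:
  fixes B :: "(('a::distrib_lattice \<Rightarrow> real) \<Rightarrow> real) set"
  assumes "\<exists>x y :: 'a. x \<noteq> y"
    and "is_projection_band B"
  shows "B = {(\<lambda>\<phi>. 0)} \<or> B = FBL"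
proof -
  have B_FBL: "B \<subseteq> FBL" and "(\<lambda>\<phi>. 0) \<in> B"
    using assms(2) by (auto simp: is_projection_band_def is_band_def is_ideal_def)
  have FBL_PH: "FBL \<subseteq> PH" and complement_FBL: "disjoint_complement B \<subseteq> FBL"
    by (auto simp: FBL_def disjoint_complement_def)
  show ?thesis
  proof (cases "in_support B (\<lambda>x. 1)")
    case True
    then have "disjoint_complement B \<subseteq> {\<lambda>\<phi>. 0}"
      using complement_FBL FBL_PH in_support_projection_band_eq_one[OF assms]
      by (intro PH_subset_zero_if_no_support) (auto dest: not_in_support_disjoint_complement)
    then have "FBL \<subseteq> B"
      using assms(2) unfolding is_projection_band_def by fastforce
    then show ?thesis
      using B_FBL by blast
  next
    case False
    then have "B \<subseteq> {\<lambda>\<phi>. 0}"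
      using B_FBL FBL_PH in_support_projection_band_eq_one[OF assms]
      by (intro PH_subset_zero_if_no_support) auto
    then show ?thesis
      using \<open>(\<lambda>\<phi>. 0) \<in> B\<close> by blast
  qed
qed

end
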